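(* Let $(N,+,* )$ be a nilpotent ring with adjoint operation $x\circ y=x+y+x*y$, let $S$ be a subring and $I$ a two-sided ideal of $N$ with $S\cap I=\{0\}$ and $N=S+I$. Then every $x\in N$ can be written uniquely as $x=s\circ i$ with $s\in S$, $i\in I$; define $x\bullet y=s\circ y\circ i$, so that $(N,+,\bullet)$ is a left brace, and let $r$ be its Yang–Baxter map. Let $X\subseteq N$ be such that $(X,r)$ is a solution of the set-theoretic Yang–Baxter equation, and let $J\subseteq I\cap X$ be a two-sided ideal of the ring $N$. Let $g:X\to X$ satisfy, for every $x\in X$: $g(x)*z=z*g(x)$ for all $z\in I$; $g(x+j)=g(x)$ whenever $j\in J$ and $x+j\in X$; $g(x)\in J$; and $g(x)\circ g(x)=0$. Suppose $k(x)=x+x*g(x)$ satisfies $k(X)\subseteq X$. Then $k$ is a reflection of $(X,r)$ and $k\circ k=\mathrm{id}_X$.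
   Context: A (left) brace is a triple $(B,+,\circ)$ with $(B,+)$ abelian group, $(B,\circ)$ group, and $x\circ(y+z)=x\circ y+x\circ z-x$. The Yang–Baxter map of the brace $(N,+,\bullet)$ is $r(x,y)=(\sigma_x(y),\tau_y(x))$ with $\sigma_x(y)=x\bullet y-x$ and $\tau_y(x)=(\sigma_x(y))^{-1}\bullet x-(\sigma_x(y))^{-1}$, inverses taken in $(N,\bullet)$. For $X\subseteq N$, $(X,r)$ is a solution of the set-theoretic Yang–Baxter equation if $r(X\times X)\subseteq X\times X$ and $(\mathrm{id}\times r)(r\times\mathrm{id})(\mathrm{id}\times r)=(r\times\mathrm{id})(\mathrm{id}\times r)(r\times\mathrm{id})$ on $X^3$. A map $k:X\to X$ is a reflection of $(X,r)$ if $r(\mathrm{id}\times k)r(\mathrm{id}\times k)=(\mathrm{id}\times k)r(\mathrm{id}\times k)r$ on $X\times X$. *)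

theory Defs
  imports Main
begin

text \<open>Rings are possibly non-unital: the type class ring (semiring + ab_group_add).\<close>

fun rprod :: "'a::ring list \<Rightarrow> 'a" where
  "rprod [] = 0"
| "rprod [x] = x"
| "rprod (x # y # xs) = x * rprod (y # xs)"

definition nilpotent_ring :: "'a::ring itself \<Rightarrow> bool" where
  "nilpotent_ring _ \<longleftrightarrow> (\<exists>n\<ge>1. \<forall>xs::'a list. length xs = n \<longrightarrow> rprod xs = 0)"

definition adj :: "'a::ring \<Rightarrow> 'a \<Rightarrow> 'a" where
  "adj x y = x + y + x * y"

definition is_subring :: "'a::ring set \<Rightarrow> bool" where
  "is_subring S \<longleftrightarrow> 0 \<in> S \<and> (\<forall>x\<in>S. \<forall>y\<in>S. x + y \<in> S \<and> x * y \<in> S) \<and> (\<forall>x\<in>S. - x \<in> S)"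

definition is_ideal :: "'a::ring set \<Rightarrow> bool" where
  "is_ideal I \<longleftrightarrow> 0 \<in> I \<and> (\<forall>x\<in>I. \<forall>y\<in>I. x + y \<in> I) \<and> (\<forall>x\<in>I. - x \<in> I)
     \<and> (\<forall>x\<in>I. \<forall>z. z * x \<in> I \<and> x * z \<in> I)"

definition decomp :: "'a::ring set \<Rightarrow> 'a set \<Rightarrow> 'a \<Rightarrow> 'a \<times> 'a" where
  "decomp S I x = (THE p. fst p \<in> S \<and> snd p \<in> I \<and> x = adj (fst p) (snd p))"

definition bullet :: "'a::ring set \<Rightarrow> 'a set \<Rightarrow> 'a \<Rightarrow> 'a \<Rightarrow> 'a" where
  "bullet S I x y = adj (adj (fst (decomp S I x)) y) (snd (decomp S I x))"

definition binv :: "'a::ring set \<Rightarrow> 'a set \<Rightarrow> 'a \<Rightarrow> 'a" where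
  "binv S I x = (THE y. bullet S I x y = 0 \<and> bullet S I y x = 0)"

definition ybmap :: "'a::ring set \<Rightarrow> 'a set \<Rightarrow> 'a \<times> 'a \<Rightarrow> 'a \<times> 'a" where
  "ybmap S I p = (let x = fst p; y = snd p; s = bullet S I x y - x; t = binv S I s
                  in (s, bullet S I t x - t))"

definition r12 :: "('a \<times> 'a \<Rightarrow> 'a \<times> 'a) \<Rightarrow> 'a \<times> 'a \<times> 'a \<Rightarrow> 'a \<times> 'a \<times> 'a" where
  "r12 r t = (case t of (x, y, z) \<Rightarrow> (fst (r (x, y)), snd (r (x, y)), z))"

definition r23 :: "('a \<times> 'a \<Rightarrow> 'a \<times> 'a) \<Rightarrow> 'a \<times> 'a \<times> 'a \<Rightarrow> 'a \<times> 'a \<times> 'a" where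
  "r23 r t = (case t of (x, y, z) \<Rightarrow> (x, fst (r (y, z)), snd (r (y, z))))"

definition is_solution :: "'a set \<Rightarrow> ('a \<times> 'a \<Rightarrow> 'a \<times> 'a) \<Rightarrow> bool" where
  "is_solution X r \<longleftrightarrow> (\<forall>x\<in>X. \<forall>y\<in>X. r (x, y) \<in> X \<times> X)
     \<and> (\<forall>x\<in>X. \<forall>y\<in>X. \<forall>z\<in>X. (r23 r \<circ> r12 r \<circ> r23 r) (x, y, z) = (r12 r \<circ> r23 r \<circ> r12 r) (x, y, z))"

definition id_times :: "('a \<Rightarrow> 'a) \<Rightarrow> 'a \<times> 'a \<Rightarrow> 'a \<times> 'a" where
  "id_times k p = (fst p, k (snd p))"

definition is_reflection :: "'a set \<Rightarrow> ('a \<times> 'a \<Rightarrow> 'a \<times> 'a) \<Rightarrow> ('a \<Rightarrow> 'a) \<Rightarrow> bool" where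
  "is_reflection X r k \<longleftrightarrow> (\<forall>x\<in>X. \<forall>y\<in>X.
     (r \<circ> id_times k \<circ> r \<circ> id_times k) (x, y) = (id_times k \<circ> r \<circ> id_times k \<circ> r) (x, y))"

end

theory Submission
  imports Defs
begin

(*
  Write x = s \<circ> i with s \<in> S and i \<in> I. In the unitisation of N the brace map
  sigma_x(y) = x \<bullet> y - x is the sandwich y |-> (1 + s) y (1 + i), and its inverse is the
  sandwich by the adjoint inverses of s and i. As g y commutes with I, all these maps send
  the twist k(y) = y (1 + g y) to sigma(y) (1 + g y). Moving x by an element of the ideal J changes only the
  I-part of its factorization, and only by an element of J; so the inverse of sigma_x changes
  only modulo J, which g does not see. With these facts both sides of the reflection equation
  at (x, y) evaluate to (x (1 + g b), w (1 + g w)) for the same b and w. Finally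
  k (k x) = x (1 + g x)^2 = x because g x \<circ> g x = 0.
*)

lemma subring_zero: "is_subring S \<Longrightarrow> 0 \<in> S"
  and subring_add: "is_subring S \<Longrightarrow> x \<in> S \<Longrightarrow> y \<in> S \<Longrightarrow> x + y \<in> S"
  and subring_mult: "is_subring S \<Longrightarrow> x \<in> S \<Longrightarrow> y \<in> S \<Longrightarrow> x * y \<in> S"
  and subring_uminus: "is_subring S \<Longrightarrow> x \<in> S \<Longrightarrow> - x \<in> S"
  by (simp_all add: is_subring_def)

lemma subring_diff: "is_subring S \<Longrightarrow> x \<in> S \<Longrightarrow> y \<in> S \<Longrightarrow> x - y \<in> S"
  using subring_add subring_uminus by (metis diff_conv_add_uminus)

lemma ideal_zero: "is_ideal I \<Longrightarrow> 0 \<in> I"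
  and ideal_add: "is_ideal I \<Longrightarrow> x \<in> I \<Longrightarrow> y \<in> I \<Longrightarrow> x + y \<in> I"
  and ideal_uminus: "is_ideal I \<Longrightarrow> x \<in> I \<Longrightarrow> - x \<in> I"
  and ideal_mult_left: "is_ideal I \<Longrightarrow> x \<in> I \<Longrightarrow> z * x \<in> I"
  and ideal_mult_right: "is_ideal I \<Longrightarrow> x \<in> I \<Longrightarrow> x * z \<in> I"
  by (simp_all add: is_ideal_def)

lemma ideal_diff: "is_ideal I \<Longrightarrow> x \<in> I \<Longrightarrow> y \<in> I \<Longrightarrow> x - y \<in> I"
  using ideal_add ideal_uminus by (metis diff_conv_add_uminus)

lemma adj_assoc: "adj (adj x y) z = adj x (adj y z)"
  for x y z :: "'a::ring"
  by (simp add: adj_def algebra_simps)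

lemma adj_0_left [simp]: "adj 0 x = x"
  and adj_0_right [simp]: "adj x 0 = x"
  for x :: "'a::ring"
  by (simp_all add: adj_def)

lemma adj_inverse_unique: "adj y x = 0 \<Longrightarrow> adj x z = 0 \<Longrightarrow> y = z"
  for x y z :: "'a::ring"
  by (metis adj_0_left adj_0_right adj_assoc)

(* sandwich a b w is the product (1 + a) w (1 + b) in the unitisation of the ring. *)
definition sandwich :: "'a::ring \<Rightarrow> 'a \<Rightarrow> 'a \<Rightarrow> 'a" where
  "sandwich a b w = w + a * w + w * b + a * w * b"

lemma sandwich_sandwich: "sandwich a b (sandwich a' b' w) = sandwich (adj a a') (adj b' b) w"
  by (simp add: sandwich_def adj_def algebra_simps)

lemma sandwich_0_0 [simp]: "sandwich 0 0 w = w"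
  by (simp add: sandwich_def)

lemma sandwich_right_mult:
  assumes "b * g = g * b"
  shows "sandwich a b (w + w * g) = sandwich a b w + sandwich a b w * g"
proof -
  have "w * (g * b) = w * (b * g)" "a * (w * (g * b)) = a * (w * (b * g))"
    using assms by simp_all
  then show ?thesis by (simp add: sandwich_def algebra_simps)
qed

lemma sandwich_diff_right: "sandwich a b w - sandwich a b' w = (w + a * w) * (b - b')"
  by (simp add: sandwich_def algebra_simps)

lemma sandwich_in_ideal: "is_ideal J \<Longrightarrow> w \<in> J \<Longrightarrow> sandwich a b w \<in> J"
  unfolding sandwich_def by (simp add: ideal_add ideal_mult_left ideal_mult_right)

section \<open>Adjoint inverses in a nilpotent ring\<close>

lemma nilpotent_ring_replicate:
  assumes "nilpotent_ring TYPE('a::ring)"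
  obtains n where "\<And>x::'a. rprod (replicate (Suc n) x) = 0"
proof -
  obtain n where "n \<ge> 1" "\<forall>xs::'a list. length xs = n \<longrightarrow> rprod xs = 0"
    using assms unfolding nilpotent_ring_def by blast
  then show thesis using that[of "n - 1"] by simp
qed

(* The partial sums -x + x^2 - x^3 + ... of the adjoint inverse of x. *)
fun quasi_inv_approx :: "'a::ring \<Rightarrow> nat \<Rightarrow> 'a" where
  "quasi_inv_approx x 0 = - x"
| "quasi_inv_approx x (Suc n) = - x - x * quasi_inv_approx x n"

lemma adj_quasi_inv_approx:
  "adj x (quasi_inv_approx x n) = rprod (replicate (Suc (Suc n)) x)
   \<or> adj x (quasi_inv_approx x n) = - rprod (replicate (Suc (Suc n)) x)"
proof (induction n)
  case 0
  show ?case by (simp add: adj_def)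
next
  case (Suc n)
  have "adj x (quasi_inv_approx x (Suc n)) = - (x * adj x (quasi_inv_approx x n))"
    by (simp add: adj_def algebra_simps)
  with Suc show ?case by auto
qed

lemma quasi_inv_approx_commute: "x * quasi_inv_approx x n = quasi_inv_approx x n * x"
proof (induction n)
  case 0
  show ?case by simp
next
  case (Suc n)
  then have "x * (x * quasi_inv_approx x n) = x * (quasi_inv_approx x n * x)" by simp
  then show ?case by (simp add: algebra_simps)
qed

lemma quasi_inv_approx_adj_inverse:
  assumes "nilpotent_ring TYPE('a::ring)"
  obtains n where "\<And>x::'a. adj x (quasi_inv_approx x n) = 0"
    and "\<And>x::'a. adj (quasi_inv_approx x n) x = 0"
proof -
  obtain n where n: "\<And>x::'a. rprod (replicate (Suc n) x) = 0"
    using nilpotent_ring_replicate[OF assms] by blast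
  have right: "adj x (quasi_inv_approx x n) = 0" for x :: 'a
    using adj_quasi_inv_approx[of x n] n[of x] by auto
  moreover have "adj (quasi_inv_approx x n) x = adj x (quasi_inv_approx x n)" for x :: 'a
    by (simp add: adj_def quasi_inv_approx_commute algebra_simps)
  ultimately show thesis using that by metis
qed

definition adj_inv :: "'a::ring \<Rightarrow> 'a" where
  "adj_inv x = (SOME y. adj x y = 0 \<and> adj y x = 0)"

lemma
  assumes "nilpotent_ring TYPE('a::ring)"
  shows adj_adj_inv [simp]: "adj x (adj_inv x) = 0"
    and adj_inv_adj [simp]: "adj (adj_inv x) x = (0::'a)"
proof -
  obtain n where "\<And>x::'a. adj x (quasi_inv_approx x n) = 0" "\<And>x::'a. adj (quasi_inv_approx x n) x = 0"
    using quasi_inv_approx_adj_inverse[OF assms] by blast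
  then have "\<exists>y. adj x y = 0 \<and> adj y x = 0" by blast
  then show "adj x (adj_inv x) = 0" "adj (adj_inv x) x = 0"
    unfolding adj_inv_def by (metis (mono_tags, lifting) someI_ex)+
qed

lemma adj_inv_eq_quasi_inv_approx:
  assumes "nilpotent_ring TYPE('a::ring)"
  obtains n where "\<And>x::'a. adj_inv x = quasi_inv_approx x n"
proof -
  obtain n where "\<And>x::'a. adj x (quasi_inv_approx x n) = 0"
    using quasi_inv_approx_adj_inverse[OF assms] by blast
  then show thesis using that adj_inverse_unique adj_inv_adj[OF assms] by blast
qed

lemma adj_inv_in_subring:
  assumes "nilpotent_ring TYPE('a::ring)" "is_subring S" "(x::'a) \<in> S"
  shows "adj_inv x \<in> S"
proof -
  obtain n where "\<And>x::'a. adj_inv x = quasi_inv_approx x n"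
    using adj_inv_eq_quasi_inv_approx[OF assms(1)] by blast
  moreover have "quasi_inv_approx x m \<in> S" for m
    by (induction m) (use assms(2,3) in \<open>simp_all add: subring_diff subring_mult subring_uminus\<close>)
  ultimately show ?thesis by simp
qed

lemma adj_inv_in_ideal:
  assumes "nilpotent_ring TYPE('a::ring)" "is_ideal I" "(x::'a) \<in> I"
  shows "adj_inv x \<in> I"
proof -
  have "adj_inv x = adj x (adj_inv x) - x - x * adj_inv x"
    by (simp add: adj_def algebra_simps)
  also have "\<dots> = - x - x * adj_inv x"
    using assms(1) by simp
  also have "\<dots> \<in> I" using assms(2,3) by (simp add: ideal_diff ideal_uminus ideal_mult_right)
  finally show ?thesis .
qed

(* In the unitisation: (1 + p') - (1 + p) = - (1 + p') (y - x) (1 + p) when 1 + p' inverts 1 + y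
   and 1 + p inverts 1 + x. *)
lemma adj_inv_diff:
  assumes "nilpotent_ring TYPE('a::ring)"
  shows "adj_inv y - adj_inv x = - sandwich (adj_inv y) (adj_inv x) (y - x :: 'a)"
proof -
  define p p' where "p = adj_inv x" and "p' = adj_inv y"
  have "p' - p = - sandwich p' p (y - x) + adj p' y - adj x p - p' * adj x p + adj p' y * p"
    by (simp add: sandwich_def adj_def algebra_simps)
  then show ?thesis using assms unfolding p_def p'_def by simp
qed

lemma adj_cancel_left:
  assumes "nilpotent_ring TYPE('a::ring)" "adj x y = adj x (z::'a)"
  shows "y = z"
  by (metis assms adj_0_left adj_assoc adj_inv_adj)

section \<open>The brace of a factorization N = S \<circ> I\<close>

definition brace_sigma :: "'a::ring set \<Rightarrow> 'a set \<Rightarrow> 'a \<Rightarrow> 'a \<Rightarrow> 'a" where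
  "brace_sigma S I x y = bullet S I x y - x"

lemma ybmap_eq:
  "ybmap S I (x, y) = (brace_sigma S I x y, brace_sigma S I (binv S I (brace_sigma S I x y)) x)"
  by (simp add: ybmap_def brace_sigma_def Let_def)

locale subring_ideal_factorization =
  fixes S I :: "'a::ring set"
  assumes nilpotent: "nilpotent_ring TYPE('a)"
    and subring: "is_subring S"
    and ideal: "is_ideal I"
    and subring_inter_ideal: "S \<inter> I = {0}"
    and subring_plus_ideal: "\<forall>x. \<exists>s\<in>S. \<exists>i\<in>I. x = s + i"
begin

lemma adj_factorization_unique:
  assumes "s \<in> S" "i \<in> I" "s' \<in> S" "i' \<in> I" "adj s i = adj s' i'"
  shows "s = s'" and "i = i'"
proof -
  have "s - s' = (i' + s' * i') - (i + s * i)"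
    using assms(5) unfolding adj_def by (simp add: algebra_simps)
  also have "\<dots> \<in> I"
    using assms(2,4) ideal by (simp add: ideal_add ideal_diff ideal_mult_left)
  finally have "s - s' \<in> S \<inter> I"
    using assms(1,3) subring by (simp add: subring_diff)
  then show "s = s'" using subring_inter_ideal by simp
  then show "i = i'" using assms(5) adj_cancel_left[OF nilpotent] by blast
qed

lemma adj_factorization_exists: "\<exists>s\<in>S. \<exists>i\<in>I. x = adj s i"
proof -
  obtain s i where si: "s \<in> S" "i \<in> I" "x = s + i"
    using subring_plus_ideal by blast
  have "adj s (i + adj_inv s * i) = s + i + adj s (adj_inv s) * i"
    by (simp add: adj_def algebra_simps)
  then have "x = adj s (i + adj_inv s * i)"
    using si(3) nilpotent by simp
  moreover have "i + adj_inv s * i \<in> I"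
    using si(2) ideal by (simp add: ideal_add ideal_mult_left)
  ultimately show ?thesis using si(1) by blast
qed

lemma decomp_adj: "s \<in> S \<Longrightarrow> i \<in> I \<Longrightarrow> decomp S I (adj s i) = (s, i)"
  unfolding decomp_def by (rule the_equality) (use adj_factorization_unique in auto)

lemma
  assumes "decomp S I x = (s, i)"
  shows decomp_fst_in: "s \<in> S" and decomp_snd_in: "i \<in> I" and adj_decomp: "x = adj s i"
proof -
  obtain s' i' where "s' \<in> S" "i' \<in> I" "x = adj s' i'"
    using adj_factorization_exists by blast
  with assms decomp_adj show "s \<in> S" "i \<in> I" "x = adj s i" by auto
qed

lemma bullet_eq: "decomp S I x = (s, i) \<Longrightarrow> bullet S I x y = adj (adj s y) i"
  by (simp add: bullet_def)

lemma brace_sigma_eq: "decomp S I x = (s, i) \<Longrightarrow> brace_sigma S I x w = sandwich s i w"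
  unfolding brace_sigma_def bullet_eq by (subst (2) adj_decomp)
    (simp_all add: adj_def sandwich_def algebra_simps)

lemma binv_eq:
  assumes "decomp S I z = (s, i)"
  shows "binv S I z = adj (adj_inv s) (adj_inv i)"
  unfolding binv_def
proof (rule the_equality)
  have "s \<in> S" "i \<in> I"
    using assms by (rule decomp_fst_in, rule decomp_snd_in)
  then have "decomp S I (adj (adj_inv s) (adj_inv i)) = (adj_inv s, adj_inv i)"
    using nilpotent subring ideal by (simp add: decomp_adj adj_inv_in_subring adj_inv_in_ideal)
  then show "bullet S I z (adj (adj_inv s) (adj_inv i)) = 0
      \<and> bullet S I (adj (adj_inv s) (adj_inv i)) z = 0"
    using assms nilpotent adj_decomp[OF assms]
    by (simp add: bullet_eq adj_assoc)
next
  fix t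
  assume "bullet S I z t = 0 \<and> bullet S I t z = 0"
  then have t0: "bullet S I z t = 0" by blast
  obtain s' i' where e': "decomp S I t = (s', i')" by fastforce
  note si = decomp_fst_in[OF assms] decomp_snd_in[OF assms]
  note si' = decomp_fst_in[OF e'] decomp_snd_in[OF e']
  have "adj (adj s s') (adj i' i) = adj 0 0"
    using t0 by (simp add: bullet_eq[OF assms] adj_decomp[OF e'] adj_assoc)
  moreover have "adj s s' \<in> S" "adj i' i \<in> I"
    using si si' subring ideal
    by (simp_all add: adj_def subring_add subring_mult ideal_add ideal_mult_left)
  ultimately have "adj s s' = 0" "adj i' i = 0"
    using adj_factorization_unique subring_zero[OF subring] ideal_zero[OF ideal] by blast+
  then have "s' = adj_inv s" "i' = adj_inv i"
    using adj_inverse_unique adj_inv_adj[OF nilpotent] adj_adj_inv[OF nilpotent] by metis+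
  then show "t = adj (adj_inv s) (adj_inv i)"
    using adj_decomp[OF e'] by simp
qed

lemma brace_sigma_binv_eq:
  assumes "decomp S I z = (s, i)"
  shows "brace_sigma S I (binv S I z) w = sandwich (adj_inv s) (adj_inv i) w"
proof -
  have "decomp S I (binv S I z) = (adj_inv s, adj_inv i)"
    using decomp_fst_in[OF assms] decomp_snd_in[OF assms] nilpotent subring ideal
    by (simp add: binv_eq[OF assms] decomp_adj adj_inv_in_subring adj_inv_in_ideal)
  then show ?thesis by (rule brace_sigma_eq)
qed

lemma brace_sigma_brace_sigma_binv [simp]: "brace_sigma S I z (brace_sigma S I (binv S I z) w) = w"
  and brace_sigma_binv_brace_sigma [simp]: "brace_sigma S I (binv S I z) (brace_sigma S I z w) = w"
proof -
  obtain s i where e: "decomp S I z = (s, i)" by fastforce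
  show "brace_sigma S I z (brace_sigma S I (binv S I z) w) = w"
    "brace_sigma S I (binv S I z) (brace_sigma S I z w) = w"
    using nilpotent
    by (simp_all add: brace_sigma_eq[OF e] brace_sigma_binv_eq[OF e] sandwich_sandwich)
qed

lemma brace_sigma_right_mult:
  assumes "\<And>j. j \<in> I \<Longrightarrow> g * j = j * g"
  shows "brace_sigma S I z (w + w * g) = brace_sigma S I z w + brace_sigma S I z w * g"
proof -
  obtain s i where e: "decomp S I z = (s, i)" by fastforce
  have "i * g = g * i" using assms decomp_snd_in[OF e] by simp
  then show ?thesis unfolding brace_sigma_eq[OF e] by (rule sandwich_right_mult)
qed

lemma decomp_add_ideal:
  assumes "j \<in> I" "decomp S I z = (s, i)"
  shows "decomp S I (z + j) = (s, i + j + adj_inv s * j)"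
proof -
  have "adj s (i + j + adj_inv s * j) = adj s i + j + adj s (adj_inv s) * j"
    by (simp add: adj_def algebra_simps)
  then have "z + j = adj s (i + j + adj_inv s * j)"
    using adj_decomp[OF assms(2)] nilpotent by simp
  moreover have "i + j + adj_inv s * j \<in> I"
    using decomp_snd_in[OF assms(2)] assms(1) ideal by (simp add: ideal_add ideal_mult_left)
  ultimately show ?thesis using decomp_fst_in[OF assms(2)] decomp_adj by simp
qed

lemma brace_sigma_binv_diff_in_ideal:
  assumes "is_ideal J" "J \<subseteq> I" "z' - z \<in> J"
  shows "brace_sigma S I (binv S I z') w - brace_sigma S I (binv S I z) w \<in> J"
proof -
  obtain s i where e: "decomp S I z = (s, i)" by fastforce
  define i' where "i' = i + (z' - z) + adj_inv s * (z' - z)"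
  have e': "decomp S I z' = (s, i')"
    using decomp_add_ideal[of "z' - z", OF _ e] assms(2,3) unfolding i'_def by auto
  have "i' - i \<in> J"
    using assms(1,3) unfolding i'_def by (simp add: ideal_add ideal_mult_left)
  then have "adj_inv i' - adj_inv i \<in> J"
    using assms(1) by (simp add: adj_inv_diff[OF nilpotent] sandwich_in_ideal ideal_uminus)
  then show ?thesis
    using assms(1)
    by (simp add: brace_sigma_binv_eq[OF e] brace_sigma_binv_eq[OF e'] sandwich_diff_right
        ideal_mult_left)
qed

end

section \<open>Twisted reflections\<close>

definition twist :: "('a::ring \<Rightarrow> 'a) \<Rightarrow> 'a \<Rightarrow> 'a" where
  "twist g x = x + x * g x"

locale reflection_twist = subring_ideal_factorization +
  fixes X J :: "'a::ring set" and g :: "'a \<Rightarrow> 'a"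
  assumes ybmap_closed: "\<And>x y. x \<in> X \<Longrightarrow> y \<in> X \<Longrightarrow> ybmap S I (x, y) \<in> X \<times> X"
    and ideal_J: "is_ideal J"
    and J_subset_I: "J \<subseteq> I"
    and g_commute: "\<And>x j. x \<in> X \<Longrightarrow> j \<in> I \<Longrightarrow> g x * j = j * g x"
    and g_in_J: "\<And>x. x \<in> X \<Longrightarrow> g x \<in> J"
    and g_add_J: "\<And>x j. x \<in> X \<Longrightarrow> j \<in> J \<Longrightarrow> x + j \<in> X \<Longrightarrow> g (x + j) = g x"
    and twist_closed: "\<And>x. x \<in> X \<Longrightarrow> twist g x \<in> X"
begin

lemma g_eq_if_diff_in_J: "x \<in> X \<Longrightarrow> y \<in> X \<Longrightarrow> y - x \<in> J \<Longrightarrow> g y = g x"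
  using g_add_J[of x "y - x"] by simp

lemma brace_sigma_in:
  assumes "x \<in> X" "y \<in> X"
  shows "brace_sigma S I x y \<in> X" and "brace_sigma S I (binv S I (brace_sigma S I x y)) x \<in> X"
  using ybmap_closed[OF assms] by (simp_all add: ybmap_eq)

lemma g_twist: "x \<in> X \<Longrightarrow> g (twist g x) = g x"
  using twist_closed ideal_J g_in_J
  by (intro g_eq_if_diff_in_J) (simp_all add: twist_def ideal_mult_left)

lemma twist_involutive: "x \<in> X \<Longrightarrow> adj (g x) (g x) = 0 \<Longrightarrow> twist g (twist g x) = x"
proof -
  assume x: "x \<in> X" and g2: "adj (g x) (g x) = 0"
  have "twist g (twist g x) = x + x * adj (g x) (g x)"
    using g_twist[OF x] by (simp add: twist_def adj_def algebra_simps)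
  then show ?thesis using g2 by simp
qed

lemma brace_sigma_twist:
  "y \<in> X \<Longrightarrow> brace_sigma S I z (twist g y) = brace_sigma S I z y + brace_sigma S I z y * g y"
  unfolding twist_def using g_commute by (blast intro: brace_sigma_right_mult)

lemma g_brace_sigma_binv:
  assumes "z' - z \<in> J" "brace_sigma S I (binv S I z') w \<in> X" "brace_sigma S I (binv S I z) w \<in> X"
  shows "g (brace_sigma S I (binv S I z') w) = g (brace_sigma S I (binv S I z) w)"
  using assms ideal_J J_subset_I by (blast intro: g_eq_if_diff_in_J brace_sigma_binv_diff_in_ideal)

lemma twist_reflection: "is_reflection X (ybmap S I) (twist g)"
  unfolding is_reflection_def
proof (intro ballI)
  fix x y
  assume x: "x \<in> X" and y: "y \<in> X"
  let ?\<sigma> = "brace_sigma S I" and ?k = "twist g"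
  let ?\<rho> = "\<lambda>z. brace_sigma S I (binv S I z)"
  define a b where "a = ?\<sigma> x y" and "b = ?\<rho> a x"
  define u v where "u = ?\<sigma> x (?k y)" and "v = ?\<rho> u x"
  define c where "c = x + x * g b"
  define w where "w = ?\<rho> c a"
  have ab: "a \<in> X" "b \<in> X" using brace_sigma_in[OF x y] unfolding a_def b_def by simp_all
  have uv: "u \<in> X" "v \<in> X"
    using brace_sigma_in[OF x twist_closed[OF y]] unfolding u_def v_def by simp_all
  have u: "u = a + a * g y" unfolding u_def a_def using y by (rule brace_sigma_twist)
  then have "u - a \<in> J" using ideal_J g_in_J[OF y] by (simp add: ideal_mult_left)
  then have "g v = g b"
    using g_brace_sigma_binv[OF _ uv(2)[unfolded v_def] ab(2)[unfolded b_def]]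
    unfolding v_def b_def by blast
  then have c_uv: "?\<sigma> u (?k v) = c"
    using uv(2) by (simp add: brace_sigma_twist c_def v_def)
  have c_ab: "?\<sigma> a (?k b) = c"
    using ab(2) by (simp add: brace_sigma_twist c_def b_def)
  have w: "?\<rho> c a \<in> X"
    using brace_sigma_in(2)[OF ab(1) twist_closed[OF ab(2)]] unfolding c_ab .
  have "c - x \<in> J" unfolding c_def using ideal_J g_in_J[OF ab(2)] by (simp add: ideal_mult_left)
  moreover have "?\<rho> x a = y" unfolding a_def by simp
  ultimately have "g w = g y"
    using g_brace_sigma_binv[of c x a] w y unfolding w_def by simp
  then have "?\<rho> c u = ?k w"
    unfolding u twist_def w_def using g_commute[OF y] by (simp add: brace_sigma_right_mult)
  moreover have "(ybmap S I \<circ> id_times ?k \<circ> ybmap S I \<circ> id_times ?k) (x, y) = (c, ?\<rho> c u)"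
    using c_uv by (simp add: id_times_def ybmap_eq flip: u_def v_def)
  moreover have "(id_times ?k \<circ> ybmap S I \<circ> id_times ?k \<circ> ybmap S I) (x, y) = (c, ?k w)"
    using c_ab by (simp add: id_times_def ybmap_eq w_def flip: a_def b_def)
  ultimately show "(ybmap S I \<circ> id_times ?k \<circ> ybmap S I \<circ> id_times ?k) (x, y)
      = (id_times ?k \<circ> ybmap S I \<circ> id_times ?k \<circ> ybmap S I) (x, y)"
    by simp
qed

end

theorem mainTheorem12:
  fixes S I X J :: "'a::ring set" and g :: "'a \<Rightarrow> 'a"
  assumes nil: "nilpotent_ring TYPE('a)"
    and S: "is_subring S" and I: "is_ideal I"
    and SI: "S \<inter> I = {0}" and sum: "\<forall>x. \<exists>s\<in>S. \<exists>i\<in>I. x = s + i"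
    and sol: "is_solution X (ybmap S I)"
    and J: "is_ideal J" "J \<subseteq> I \<inter> X"
    and gX: "\<forall>x\<in>X. g x \<in> X"
    and gcomm: "\<forall>x\<in>X. \<forall>z\<in>I. g x * z = z * g x"
    and gJinv: "\<forall>x\<in>X. \<forall>j\<in>J. x + j \<in> X \<longrightarrow> g (x + j) = g x"
    and gJ: "\<forall>x\<in>X. g x \<in> J"
    and gsq: "\<forall>x\<in>X. adj (g x) (g x) = 0"
    and kX: "\<forall>x\<in>X. x + x * g x \<in> X"
  shows "is_reflection X (ybmap S I) (\<lambda>x. x + x * g x)
         \<and> (\<forall>x\<in>X. (\<lambda>x. x + x * g x) ((\<lambda>x. x + x * g x) x) = x)"
proof -
  interpret reflection_twist S I X J g
    using nil S I SI sum sol J gcomm gJinv gJ kX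
    by unfold_locales (auto simp: is_solution_def twist_def)
  have "\<forall>x\<in>X. twist g (twist g x) = x"
    using twist_involutive gsq by blast
  with twist_reflection show ?thesis
    unfolding twist_def by simp
qed

end
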